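(* Assume the linear setting below. For every integer $k\ge0$, \[ \min\left\{b_{\varepsilon s^k+s^k-1}:\ \varepsilon\in\{1,\dots,s-1\}\right\}=b_{s^{k+1}-1}, \] i.e. among the integers with base-$s$ digits $\varepsilon\,(s-1)^k$, $\varepsilon\ne0$, the value of $b$ is minimal for $\varepsilon=s-1$. In particular $b_{s-1}\le b_{s-2}\le\cdots\le b_1$.
   Context: Linear setting: integers $q\ge2$, $r\in\{0,1,\dots,q-1\}$, $p>q+r$; $A=\{d\in\{0,1,\dots,p-1\}: d\equiv r\pmod q\}$, $s=\#A\ge2$, and $h(i)=qi+r$ for $0\le i\le s-1$. For a positive integer $n$ with base-$s$ expansion $n=\sum_{i=0}^k\varepsilon_i s^i$ ($\varepsilon_k\ne0$), $a_n=\sum_{i=0}^k h(\varepsilon_i)p^i$ and $b_n=a_n/n^{\log_s p}$. *)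

theory Defs
  imports Complex_Main
begin

definition digitSet :: "nat \<Rightarrow> nat \<Rightarrow> nat \<Rightarrow> nat set" where
  "digitSet q r p = {d \<in> {0..<p}. d mod q = r}"

definition sval :: "nat \<Rightarrow> nat \<Rightarrow> nat \<Rightarrow> nat" where
  "sval q r p = card (digitSet q r p)"

definition hmap :: "nat \<Rightarrow> nat \<Rightarrow> nat \<Rightarrow> nat" where
  "hmap q r i = q * i + r"

definition topIdx :: "nat \<Rightarrow> nat \<Rightarrow> nat" where
  "topIdx s n = (GREATEST k. s ^ k \<le> n)"

definition digit :: "nat \<Rightarrow> nat \<Rightarrow> nat \<Rightarrow> nat" where
  "digit s n i = n div s ^ i mod s"

definition aseq :: "nat \<Rightarrow> nat \<Rightarrow> nat \<Rightarrow> nat \<Rightarrow> nat" where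
  "aseq q r p n = (let s = sval q r p in
      \<Sum>i\<le>topIdx s n. hmap q r (digit s n i) * p ^ i)"

definition bseq :: "nat \<Rightarrow> nat \<Rightarrow> nat \<Rightarrow> nat \<Rightarrow> real" where
  "bseq q r p n = real (aseq q r p n) / (real n) powr (log (real (sval q r p)) (real p))"

end

theory Submission
  imports Defs "HOL-Analysis.Convex"
begin

text \<open>Write \<open>\<alpha> = log s p\<close>, so \<open>s powr \<alpha> = p\<close>. The number \<open>m s^k - 1\<close> has base-\<open>s\<close> digits
  \<open>m - 1\<close> followed by \<open>k\<close> digits \<open>s - 1\<close>, hence with \<open>t = s^k\<close> and
  \<open>c = (q(s-1)+r)/(p-1)\<close> its \<open>a\<close>-value is \<open>(q(m-1)+r) t^\<alpha> + c (t^\<alpha> - 1)\<close>.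
  Convexity of \<open>x^\<alpha>\<close> on \<open>[1, s]\<close> bounds this from below by \<open>c ((mt)^\<alpha> - 1)\<close>, with equality
  for \<open>m = s\<close>, and \<open>(y^\<alpha> - 1)/(y - 1)^\<alpha>\<close> is decreasing in \<open>y > 1\<close>; so the ratio \<open>b\<close> is
  smallest for \<open>m = s\<close>. For single digits \<open>b\<^sub>e = (q + r/e) e^(1-\<alpha>)\<close> is plainly decreasing.\<close>

lemma powr_le_chord:
  fixes a b x \<alpha> :: real
  assumes "\<alpha> \<ge> 1" "0 < a" "a \<le> x" "x \<le> b"
  shows "x powr \<alpha> \<le> (b powr \<alpha> - a powr \<alpha>) / (b - a) * (x - a) + a powr \<alpha>"
proof -
  have "convex_on {a..b} (\<lambda>x. x powr \<alpha>)"
    by (rule convex_on_subset[OF powr_convex[OF assms(1)]]) (use assms(2) in auto)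
  then show ?thesis
    using convex_onD_Icc' assms(3,4) by fastforce
qed

lemma powr_minus_one_ratio_antimono:
  fixes x y \<alpha> :: real
  assumes "\<alpha> \<ge> 1" "1 < x" "x \<le> y"
  shows "(y powr \<alpha> - 1) / (y - 1) powr \<alpha> \<le> (x powr \<alpha> - 1) / (x - 1) powr \<alpha>"
proof -
  txt \<open>In terms of \<open>u = 1/y\<close> the ratio is \<open>(1 - u^\<alpha>)/(1 - u) \<cdot> (1 - u)^(1-\<alpha>)\<close>: a chord slope
    of the convex \<open>u^\<alpha>\<close> towards \<open>1\<close> times a power with nonpositive exponent, both increasing in \<open>u\<close>.\<close>
  define u v where "u = 1 / y" and "v = 1 / x"
  have uv: "0 < u" "u \<le> v" "v < 1"
    using assms by (auto simp: u_def v_def field_simps)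
  have ratio: "(z powr \<alpha> - 1) / (z - 1) powr \<alpha> = (1 - (1/z) powr \<alpha>) / (1 - 1/z) powr \<alpha>"
    if "1 < z" for z :: real
  proof -
    have "1 - 1/z = (z - 1) / z" using that by (simp add: field_simps)
    then show ?thesis
      using that by (simp add: powr_divide field_simps)
  qed
  have slope: "(1 - u powr \<alpha>) / (1 - u) \<le> (1 - v powr \<alpha>) / (1 - v)"
  proof -
    have "v powr \<alpha> \<le> (1 - u powr \<alpha>) / (1 - u) * (v - u) + u powr \<alpha>"
      using powr_le_chord[OF assms(1), of u v 1] uv by simp
    then show ?thesis
      using uv by (simp add: field_simps)
  qed
  have "(1 - u) powr (1 - \<alpha>) \<le> (1 - v) powr (1 - \<alpha>)"
    using uv assms(1) by (intro powr_mono2') auto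
  then have "(1 - u powr \<alpha>) / (1 - u) * (1 - u) powr (1 - \<alpha>)
      \<le> (1 - v powr \<alpha>) / (1 - v) * (1 - v) powr (1 - \<alpha>)"
    using slope uv assms(1) powr_le1[of \<alpha> v] by (intro mult_mono) auto
  then show ?thesis
    using uv assms by (simp add: ratio u_def v_def powr_diff)
qed

lemma affine_div_powr_antimono:
  fixes q r x y \<alpha> :: real
  assumes "\<alpha> \<ge> 1" "0 < x" "x \<le> y" "0 \<le> q" "0 \<le> r"
  shows "(q * y + r) / y powr \<alpha> \<le> (q * x + r) / x powr \<alpha>"
proof -
  have split: "(q * z + r) / z powr \<alpha> = (q + r / z) * z powr (1 - \<alpha>)" if "0 < z" for z :: real
    using that by (simp add: powr_diff field_simps)
  have "r / y \<le> r / x"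
    using assms by (intro divide_left_mono) auto
  moreover have "y powr (1 - \<alpha>) \<le> x powr (1 - \<alpha>)"
    using assms by (intro powr_mono2') auto
  ultimately have "(q + r / y) * y powr (1 - \<alpha>) \<le> (q + r / x) * x powr (1 - \<alpha>)"
    using assms by (intro mult_mono) auto
  then show ?thesis
    using assms by (simp add: split)
qed

lemma chord_scaled_powr_le:
  fixes q r s x \<alpha> :: real
  assumes "\<alpha> \<ge> 1" "1 < x" "x \<le> s" "0 \<le> r" "0 \<le> q"
  shows "(q * (s - 1) + r) / (s powr \<alpha> - 1) * (x powr \<alpha> - 1) \<le> q * (x - 1) + r"
proof -
  have s: "1 < s"
    using assms(2,3) by linarith
  then have S: "0 < s powr \<alpha> - 1"
    using assms(1) by simp
  have "0 \<le> (q * (s - 1) + r) / (s powr \<alpha> - 1)"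
    using S s assms(4,5) by simp
  moreover have "x powr \<alpha> - 1 \<le> (s powr \<alpha> - 1) / (s - 1) * (x - 1)"
    using powr_le_chord[OF assms(1), of 1 x s] assms(2,3) by simp
  ultimately have "(q * (s - 1) + r) / (s powr \<alpha> - 1) * (x powr \<alpha> - 1)
      \<le> (q * (s - 1) + r) / (s powr \<alpha> - 1) * ((s powr \<alpha> - 1) / (s - 1) * (x - 1))"
    by (rule mult_left_mono[rotated])
  also have "\<dots> = (q * (s - 1) + r) / (s - 1) * (x - 1)"
    using S by simp
  also have "\<dots> = q * (x - 1) + r * ((x - 1) / (s - 1))"
    using s by (simp add: field_simps)
  also have "\<dots> \<le> q * (x - 1) + r"
    using assms(2-4) s by (intro add_left_mono mult_left_le) auto
  finally show ?thesis .
qed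

lemma block_ratio_le:
  fixes q r s t x \<alpha> :: real
  assumes "\<alpha> \<ge> 1" "1 \<le> t" "1 < x" "x \<le> s" "0 \<le> q" "0 \<le> r"
  defines "c \<equiv> (q * (s - 1) + r) / (s powr \<alpha> - 1)"
  shows "((q * (s - 1) + r) * t powr \<alpha> + c * (t powr \<alpha> - 1)) / (s * t - 1) powr \<alpha>
       \<le> ((q * (x - 1) + r) * t powr \<alpha> + c * (t powr \<alpha> - 1)) / (x * t - 1) powr \<alpha>"
proof -
  define P where "P = t powr \<alpha>"
  have s: "1 < s"
    using assms(3,4) by linarith
  then have "1 < s powr \<alpha>"
    using assms(1) by simp
  moreover have "0 \<le> q * (s - 1) + r"
    using assms(5,6) s by simp
  ultimately have c: "0 \<le> c" "c * (s powr \<alpha> - 1) = q * (s - 1) + r"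
    by (simp_all add: c_def)
  have "x \<le> x * t"
    using mult_left_mono[of 1 t x] assms(2,3) by simp
  with assms(3) have xt: "1 < x * t"
    by linarith
  have "c * (x powr \<alpha> - 1) * P \<le> (q * (x - 1) + r) * P"
    using chord_scaled_powr_le[OF assms(1,3,4,6,5)] unfolding c_def
    by (rule mult_right_mono) (simp add: P_def)
  moreover have "c * ((x * t) powr \<alpha> - 1) = c * (x powr \<alpha> - 1) * P + c * (P - 1)"
    using assms(2,3) by (simp add: powr_mult P_def algebra_simps)
  ultimately have num_x: "c * ((x * t) powr \<alpha> - 1) \<le> (q * (x - 1) + r) * P + c * (P - 1)"
    by linarith
  have "c * ((s * t) powr \<alpha> - 1) = c * (s powr \<alpha> - 1) * P + c * (P - 1)"
    using assms(2) s by (simp add: powr_mult P_def algebra_simps)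
  then have num_s: "(q * (s - 1) + r) * P + c * (P - 1) = c * ((s * t) powr \<alpha> - 1)"
    by (simp add: c(2))
  have "((q * (s - 1) + r) * P + c * (P - 1)) / (s * t - 1) powr \<alpha>
      = c * (((s * t) powr \<alpha> - 1) / (s * t - 1) powr \<alpha>)"
    by (simp add: num_s)
  also have "\<dots> \<le> c * (((x * t) powr \<alpha> - 1) / (x * t - 1) powr \<alpha>)"
    using assms(1,2,4) xt by (intro mult_left_mono[OF _ c(1)] powr_minus_one_ratio_antimono)
      (auto intro: mult_right_mono)
  also have "\<dots> \<le> ((q * (x - 1) + r) * P + c * (P - 1)) / (x * t - 1) powr \<alpha>"
    using divide_right_mono[OF num_x, of "(x * t - 1) powr \<alpha>"] by simp
  finally show ?thesis
    by (simp add: P_def)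
qed

lemma sval_le: "sval q r p \<le> p"
proof -
  have "card (digitSet q r p) \<le> card {0..<p}"
    by (intro card_mono) (auto simp: digitSet_def)
  then show ?thesis
    by (simp add: sval_def)
qed

lemma topIdx_eqI:
  assumes "2 \<le> s" "s ^ k \<le> n" "n < s ^ Suc k"
  shows "topIdx s n = k"
  unfolding topIdx_def
proof (rule Greatest_equality)
  fix j
  assume "s ^ j \<le> n"
  then have "s ^ j < s ^ Suc k"
    using assms(3) by linarith
  then show "j \<le> k"
    using assms(1) power_less_imp_less_exp[of s j "Suc k"] by simp
qed (rule assms(2))

lemma mult_minus_one_div:
  fixes m b :: nat
  assumes "1 \<le> m" "0 < b"
  shows "(m * b - 1) div b = m - 1"
proof -
  obtain j where m: "m = Suc j"
    using assms(1) by (cases m) auto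
  have "m * b - 1 = (b - 1) + j * b"
    using assms(2) by (cases b) (simp_all add: m)
  also have "\<dots> div b = j"
    using assms(2) by (subst div_mult_self1) auto
  finally show ?thesis
    by (simp add: m)
qed

lemma minus_one_mod:
  fixes m s :: nat
  assumes "s dvd m" "0 < m"
  shows "(m - 1) mod s = s - 1"
proof -
  obtain j where j: "m = s * Suc j"
    using assms by (cases "m div s") (auto elim!: dvdE)
  then have s: "0 < s"
    using assms(2) by (cases s) auto
  then have "m - 1 = (s - 1) + j * s"
    using j by (cases s) auto
  then show ?thesis
    using s by (simp only: mod_mult_self1) simp
qed

lemma digit_mult_pow_minus_one_low:
  assumes "0 < s" "1 \<le> m" "i < k"
  shows "digit s (m * s ^ k - 1) i = s - 1"
proof -
  have "m * s ^ k = (m * s ^ (k - i)) * s ^ i"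
    using assms(3) by (simp flip: power_add mult.assoc)
  then have "(m * s ^ k - 1) div s ^ i = m * s ^ (k - i) - 1"
    using assms(1,2) by (simp only:) (rule mult_minus_one_div; simp)
  moreover have "(m * s ^ (k - i) - 1) mod s = s - 1"
    using assms by (intro minus_one_mod) auto
  ultimately show ?thesis
    by (simp add: digit_def)
qed

lemma digit_mult_pow_minus_one_top:
  assumes "1 \<le> m" "m \<le> s"
  shows "digit s (m * s ^ k - 1) k = m - 1"
proof -
  have "(m * s ^ k - 1) div s ^ k = m - 1"
    using assms by (intro mult_minus_one_div) auto
  then show ?thesis
    using assms by (simp add: digit_def)
qed

lemma aseq_mult_pow_minus_one:
  fixes q r p :: nat
  defines "s \<equiv> sval q r p"
  assumes "2 \<le> m" "m \<le> s"
  shows "aseq q r p (m * s ^ k - 1) = (\<Sum>i<k. hmap q r (s - 1) * p ^ i) + hmap q r (m - 1) * p ^ k"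
proof -
  define n where "n = m * s ^ k - 1"
  have "1 \<le> s ^ k"
    using assms(2,3) by simp
  moreover have "2 * s ^ k \<le> m * s ^ k" "m * s ^ k \<le> s * s ^ k"
    using assms(2,3) by (simp_all add: mult_le_mono1)
  ultimately have "s ^ k \<le> n" "n < s * s ^ k"
    unfolding n_def by linarith+
  then have "topIdx s n = k"
    using assms(2,3) by (intro topIdx_eqI) auto
  then have "aseq q r p n = (\<Sum>i<Suc k. hmap q r (digit s n i) * p ^ i)"
    by (simp add: aseq_def lessThan_Suc_atMost flip: s_def)
  also have "\<dots> = (\<Sum>i<k. hmap q r (s - 1) * p ^ i) + hmap q r (m - 1) * p ^ k"
  proof -
    have "digit s n i = s - 1" if "i < k" for i
      unfolding n_def using assms(2,3) that by (intro digit_mult_pow_minus_one_low) auto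
    moreover have "digit s n k = m - 1"
      unfolding n_def using assms(2,3) by (intro digit_mult_pow_minus_one_top) auto
    ultimately show ?thesis
      by simp
  qed
  finally show ?thesis
    by (simp add: n_def)
qed

lemma log_sval_ge_one:
  assumes "2 \<le> sval q r p"
  shows "1 \<le> log (real (sval q r p)) (real p)"
proof -
  have "log (real (sval q r p)) (real (sval q r p)) \<le> log (real (sval q r p)) (real p)"
    using assms sval_le[of q r p] by simp
  then show ?thesis
    using assms by simp
qed

lemma bseq_mult_pow_minus_one:
  fixes q r p :: nat
  defines "s \<equiv> sval q r p"
  assumes "2 \<le> m" "m \<le> s"
  shows "bseq q r p (m * s ^ k - 1)
    = ((real q * (real m - 1) + real r) * real p ^ k
        + (real q * (real s - 1) + real r) / (real p - 1) * (real p ^ k - 1))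
      / (real m * real s ^ k - 1) powr log (real s) (real p)"
proof -
  have "2 \<le> p"
    using assms sval_le[of q r p] by simp
  then have "real (\<Sum>i<k. hmap q r (s - 1) * p ^ i)
      = (real q * (real s - 1) + real r) * (\<Sum>i<k. real p ^ i)"
    using assms(2,3) by (simp add: hmap_def sum_distrib_left of_nat_diff)
  also have "\<dots> = (real q * (real s - 1) + real r) / (real p - 1) * (real p ^ k - 1)"
    using \<open>2 \<le> p\<close> by (simp add: sum_gp_strict field_simps)
  finally have "real (aseq q r p (m * s ^ k - 1))
      = (real q * (real m - 1) + real r) * real p ^ k
        + (real q * (real s - 1) + real r) / (real p - 1) * (real p ^ k - 1)"
    using aseq_mult_pow_minus_one[of m q r p k] assms by (simp add: hmap_def of_nat_diff)
  moreover have "real (m * s ^ k - 1) = real m * real s ^ k - 1"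
    using assms(2,3) by (simp add: of_nat_diff)
  ultimately show ?thesis
    by (simp add: bseq_def flip: s_def)
qed

lemma bseq_mult_pow_minus_one_ge:
  fixes q r p :: nat
  defines "s \<equiv> sval q r p"
  assumes "2 \<le> m" "m \<le> s"
  shows "bseq q r p (s ^ Suc k - 1) \<le> bseq q r p (m * s ^ k - 1)"
proof -
  define \<alpha> where "\<alpha> = log (real s) (real p)"
  have \<alpha>: "1 \<le> \<alpha>"
    using assms log_sval_ge_one[of q r p] by (simp add: \<alpha>_def)
  have s_pow: "real s powr \<alpha> = real p"
    using assms sval_le[of q r p] by (simp add: \<alpha>_def)
  have "0 < real s"
    using assms by simp
  then have "(real s ^ k) powr \<alpha> = (real s powr \<alpha>) ^ k"
    by (simp add: powr_powr powr_power flip: powr_realpow) (simp only: mult.commute)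
  then have t_pow: "(real s ^ k) powr \<alpha> = real p ^ k"
    by (simp add: s_pow)
  have "1 \<le> real s ^ k" "1 < real m" "real m \<le> real s"
    using assms(2,3) by auto
  from block_ratio_le[OF \<alpha> this, of "real q" "real r"]
  have "((real q * (real s - 1) + real r) * real p ^ k
          + (real q * (real s - 1) + real r) / (real p - 1) * (real p ^ k - 1))
        / (real s * real s ^ k - 1) powr \<alpha>
      \<le> ((real q * (real m - 1) + real r) * real p ^ k
          + (real q * (real s - 1) + real r) / (real p - 1) * (real p ^ k - 1))
        / (real m * real s ^ k - 1) powr \<alpha>"
    unfolding s_pow t_pow by simp
  then show ?thesis
    using bseq_mult_pow_minus_one[of s q r p k] bseq_mult_pow_minus_one[of m q r p k] assms(2,3)
    by (simp add: s_def \<alpha>_def)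
qed

lemma bseq_digit_antimono:
  fixes q r p e :: nat
  defines "s \<equiv> sval q r p"
  assumes "1 \<le> e" "e + 1 < s"
  shows "bseq q r p (e + 1) \<le> bseq q r p e"
proof -
  define \<alpha> where "\<alpha> = log (real s) (real p)"
  have digit: "bseq q r p d = (real q * real d + real r) / real d powr \<alpha>" if "1 \<le> d" "d < s" for d
    using bseq_mult_pow_minus_one[of "d + 1" q r p 0] that by (simp add: s_def \<alpha>_def)
  have "1 \<le> \<alpha>"
    using assms log_sval_ge_one[of q r p] by (simp add: \<alpha>_def)
  then have "(real q * (real e + 1) + real r) / (real e + 1) powr \<alpha>
      \<le> (real q * real e + real r) / real e powr \<alpha>"
    using assms(2) by (intro affine_div_powr_antimono) auto
  then show ?thesis
    using assms(2,3) digit[of e] digit[of "e + 1"] by (simp add: add.commute)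
qed

theorem mainTheorem15:
  fixes q r p k :: nat
  assumes "q \<ge> 2" and "r < q" and "p > q + r" and "sval q r p \<ge> 2"
  shows "Min ((\<lambda>\<epsilon>. bseq q r p (\<epsilon> * sval q r p ^ k + sval q r p ^ k - 1)) ` {1..sval q r p - 1})
           = bseq q r p (sval q r p ^ (k + 1) - 1)
       \<and> (\<forall>\<epsilon>. 1 \<le> \<epsilon> \<and> \<epsilon> + 1 \<le> sval q r p - 1 \<longrightarrow> bseq q r p (\<epsilon> + 1) \<le> bseq q r p \<epsilon>)"
proof -
  define s where "s = sval q r p"
  have s: "2 \<le> s"
    using assms(4) by (simp add: s_def)
  have "Min ((\<lambda>\<epsilon>. bseq q r p (\<epsilon> * s ^ k + s ^ k - 1)) ` {1..s - 1}) = bseq q r p (s ^ (k + 1) - 1)"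
  proof (rule Min_eqI)
    have "(s - 1) * s ^ k + s ^ k - 1 = s ^ (k + 1) - 1"
      using s by (simp add: algebra_simps)
    then show "bseq q r p (s ^ (k + 1) - 1) \<in> (\<lambda>\<epsilon>. bseq q r p (\<epsilon> * s ^ k + s ^ k - 1)) ` {1..s - 1}"
      using s by (intro image_eqI[where x = "s - 1"]) auto
  next
    fix y
    assume "y \<in> (\<lambda>\<epsilon>. bseq q r p (\<epsilon> * s ^ k + s ^ k - 1)) ` {1..s - 1}"
    then obtain e where "1 \<le> e" "e \<le> s - 1" "y = bseq q r p ((e + 1) * s ^ k - 1)"
      by (auto simp: algebra_simps)
    then show "bseq q r p (s ^ (k + 1) - 1) \<le> y"
      using bseq_mult_pow_minus_one_ge[of "e + 1" q r p k] by (simp add: s_def)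
  qed simp
  moreover have "bseq q r p (e + 1) \<le> bseq q r p e" if "1 \<le> e" "e + 1 \<le> s - 1" for e
    using that bseq_digit_antimono[of e q r p] by (simp add: s_def)
  ultimately show ?thesis
    by (simp add: s_def)
qed

end
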